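(* Every precompact subset $A$ of the Banach space $c_0$ has finite entropy; moreover $\mathbf E(A)=\mathbf E_0(A)=\sup_{x\in A}\|x\|$.
   Context: $c_0$ is the real Banach space of null sequences with the supremum norm. A brick in a Banach space $X$ is a set $K_{\mathcal B,\mathcal E}=\{x\in X:\ |e_n^*(x)|\le\varepsilon_n\ \forall n\}$, where $\mathcal B=(e_n)$ is a normalized Schauder basis with biorthogonal functionals $(e_n^* )$ and $\varepsilon_n\ge0$; its unconditional radius is $r^{\rm unc}(K_{\mathcal B,\mathcal E})=\sup_{\theta_n=\pm1}\|\sum_n\theta_n\varepsilon_ne_n\|$ (norm of a divergent series $=\infty$). The entropy $\mathbf E(A)$ is the infimum of $r^{\rm unc}$ over all bricks containing $A$; the unconditional entropy $\mathbf E_0(A)$ is the same infimum over bricks built on $1$-unconditional bases (i.e. $\|\sum_n\theta_ne_n^*(x)e_n\|\le\|x\|$ for all $x$ and all signs $\theta_n=\pm1$); an empty infimum is $\infty$. A set is precompact if for every $\varepsilon>0$ it contains a finite $\varepsilon$-net. *)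

theory Defs
  imports "HOL-Analysis.Analysis"
begin

definition c0 :: "(nat \<Rightarrow> real) set" where
  "c0 = {x. x \<longlonglongrightarrow> 0}"

definition c0norm :: "(nat \<Rightarrow> real) \<Rightarrow> real" where
  "c0norm x = (SUP k. \<bar>x k\<bar>)"

definition series_conv :: "(nat \<Rightarrow> real) \<Rightarrow> (nat \<Rightarrow> nat \<Rightarrow> real) \<Rightarrow> (nat \<Rightarrow> real) \<Rightarrow> bool" where
  "series_conv a e x \<longleftrightarrow>
     (\<lambda>N. c0norm (\<lambda>k. (\<Sum>n<N. a n * e n k) - x k)) \<longlonglongrightarrow> 0"

definition schauder_basis :: "(nat \<Rightarrow> nat \<Rightarrow> real) \<Rightarrow> bool" where
  "schauder_basis e \<longleftrightarrow>
     (\<forall>n. e n \<in> c0) \<and> (\<forall>n. c0norm (e n) = 1) \<and>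
     (\<forall>x\<in>c0. \<exists>!a. series_conv a e x)"

definition coef :: "(nat \<Rightarrow> nat \<Rightarrow> real) \<Rightarrow> nat \<Rightarrow> (nat \<Rightarrow> real) \<Rightarrow> real" where
  "coef e n x = (THE a. series_conv a e x) n"

definition signs :: "(nat \<Rightarrow> real) set" where
  "signs = {\<theta>. \<forall>n. \<theta> n = 1 \<or> \<theta> n = -1}"

definition unconditional_basis :: "(nat \<Rightarrow> nat \<Rightarrow> real) \<Rightarrow> bool" where
  "unconditional_basis e \<longleftrightarrow> schauder_basis e \<and>
     (\<forall>x\<in>c0. \<forall>\<theta>\<in>signs. \<exists>y\<in>c0.
        series_conv (\<lambda>n. \<theta> n * coef e n x) e y \<and> c0norm y \<le> c0norm x)"

definition brick :: "(nat \<Rightarrow> nat \<Rightarrow> real) \<Rightarrow> (nat \<Rightarrow> real) \<Rightarrow> (nat \<Rightarrow> real) set" where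
  "brick e \<epsilon> = {x \<in> c0. \<forall>n. \<bar>coef e n x\<bar> \<le> \<epsilon> n}"

definition series_norm :: "(nat \<Rightarrow> real) \<Rightarrow> (nat \<Rightarrow> nat \<Rightarrow> real) \<Rightarrow> ereal" where
  "series_norm a e =
     (if \<exists>y\<in>c0. series_conv a e y
      then ereal (c0norm (THE y. y \<in> c0 \<and> series_conv a e y))
      else \<infinity>)"

definition r_unc :: "(nat \<Rightarrow> nat \<Rightarrow> real) \<Rightarrow> (nat \<Rightarrow> real) \<Rightarrow> ereal" where
  "r_unc e \<epsilon> = (SUP \<theta>\<in>signs. series_norm (\<lambda>n. \<theta> n * \<epsilon> n) e)"

definition entropy :: "(nat \<Rightarrow> real) set \<Rightarrow> ereal" where
  "entropy A = (INF p \<in> {(e, \<epsilon>). schauder_basis e \<and> (\<forall>n. \<epsilon> n \<ge> 0) \<and> A \<subseteq> brick e \<epsilon>}.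
                  r_unc (fst p) (snd p))"

definition entropy0 :: "(nat \<Rightarrow> real) set \<Rightarrow> ereal" where
  "entropy0 A = (INF p \<in> {(e, \<epsilon>). unconditional_basis e \<and> (\<forall>n. \<epsilon> n \<ge> 0) \<and> A \<subseteq> brick e \<epsilon>}.
                  r_unc (fst p) (snd p))"

definition precompact_c0 :: "(nat \<Rightarrow> real) set \<Rightarrow> bool" where
  "precompact_c0 A \<longleftrightarrow> (\<forall>\<epsilon>>0. \<exists>F. finite F \<and> F \<subseteq> A \<and>
      (\<forall>x\<in>A. \<exists>y\<in>F. c0norm (\<lambda>k. x k - y k) < \<epsilon>))"

end

theory Submission
  imports Defs
begin

text \<open>Lower bound: if x lies in a brick with finite unconditional radius r, fix a coordinate k
  and a length N; choosing the signs of the first N terms to agree with e n k, and adding the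
  two sign sequences that continue with +1 and with -1, shows that
  \<Sum>n<N. \<epsilon> n * \<bar>e n k\<bar> \<le> r, which bounds every partial sum of the expansion of x at k,
  hence \<bar>x k\<bar> \<le> r. So the entropy of A is at least sup_{x\<in>A} \<parallel>x\<parallel>.
  Upper bound: for precompact A the coordinatewise envelope \<epsilon> n = sup_{x\<in>A} \<bar>x n\<bar> is a
  null sequence, A lies in the brick of the unit vector basis (which is 1-unconditional) with
  these radii, and the unconditional radius of that brick is \<parallel>\<epsilon>\<parallel> = sup_{x\<in>A} \<parallel>x\<parallel>.\<close>

lemma c0_bdd_above_abs:
  assumes "x \<in> c0" shows "bdd_above (range (\<lambda>k. \<bar>x k\<bar>))"
proof -
  have "Bseq x" using assms by (auto simp: c0_def intro: convergent_imp_Bseq convergentI)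
  then obtain K where "\<And>n. norm (x n) \<le> K" unfolding Bseq_def by auto
  then show ?thesis by (auto intro!: bdd_aboveI[of _ K])
qed

lemma abs_le_c0norm: "x \<in> c0 \<Longrightarrow> \<bar>x k\<bar> \<le> c0norm x"
  unfolding c0norm_def by (rule cSUP_upper[OF _ c0_bdd_above_abs]) auto

lemma c0norm_nonneg: "x \<in> c0 \<Longrightarrow> 0 \<le> c0norm x"
  using abs_le_c0norm[of x 0] by linarith

lemma c0norm_le: "(\<And>k. \<bar>x k\<bar> \<le> r) \<Longrightarrow> c0norm x \<le> r"
  unfolding c0norm_def by (rule cSUP_least) auto

lemma c0_sum: "(\<And>n. n \<in> S \<Longrightarrow> f n \<in> c0) \<Longrightarrow> (\<lambda>k. \<Sum>n\<in>S. f n k) \<in> c0"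
  unfolding c0_def using tendsto_sum[of S "\<lambda>n k. f n k" "\<lambda>_. 0" sequentially] by auto

lemma c0_scale: "x \<in> c0 \<Longrightarrow> (\<lambda>k. c * x k) \<in> c0"
  unfolding c0_def using tendsto_mult_right_zero by auto

lemma c0_diff: "x \<in> c0 \<Longrightarrow> y \<in> c0 \<Longrightarrow> (\<lambda>k. x k - y k) \<in> c0"
  unfolding c0_def using tendsto_diff[of x 0 sequentially y 0] by auto

lemma abs_sign_mult: "\<theta> \<in> signs \<Longrightarrow> \<bar>\<theta> n * x\<bar> = \<bar>x\<bar>"
  unfolding signs_def by (cases "\<theta> n = 1") (auto simp: abs_mult)

lemma c0_sign_mult:
  assumes "x \<in> c0" "\<theta> \<in> signs" shows "(\<lambda>n. \<theta> n * x n) \<in> c0"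
proof -
  have "(\<lambda>n. \<bar>x n\<bar>) \<longlonglongrightarrow> 0" using assms(1) tendsto_rabs_zero by (auto simp: c0_def)
  then have "(\<lambda>n. \<theta> n * x n) \<longlonglongrightarrow> 0"
    by (rule Lim_null_comparison[rotated]) (simp add: abs_sign_mult[OF assms(2)])
  then show ?thesis by (simp add: c0_def)
qed

lemma c0norm_sign_mult: "\<theta> \<in> signs \<Longrightarrow> c0norm (\<lambda>n. \<theta> n * x n) = c0norm x"
  unfolding c0norm_def by (simp add: abs_sign_mult)

subsection \<open>Expansions with respect to a sequence in c0\<close>

lemma series_conv_pointwise:
  assumes e: "\<And>n. e n \<in> c0" and y: "y \<in> c0" and conv: "series_conv a e y"
  shows "(\<lambda>N. \<Sum>n<N. a n * e n k) \<longlonglongrightarrow> y k"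
proof -
  let ?d = "\<lambda>N k. (\<Sum>n<N. a n * e n k) - y k"
  have d: "?d N \<in> c0" for N
    using c0_diff[OF c0_sum[of "{..<N}" "\<lambda>n k. a n * e n k"] y] c0_scale e by auto
  have "norm (?d N k) \<le> c0norm (?d N)" for N
    using abs_le_c0norm[OF d] by simp
  then have "\<forall>\<^sub>F N in sequentially. norm (?d N k) \<le> c0norm (?d N)"
    by (intro always_eventually allI)
  then have "(\<lambda>N. ?d N k) \<longlonglongrightarrow> 0"
    using conv unfolding series_conv_def by (rule Lim_null_comparison)
  then show ?thesis by (simp add: LIM_zero_iff)
qed

lemma series_conv_unique:
  assumes "\<And>n. e n \<in> c0" "y \<in> c0" "z \<in> c0" "series_conv a e y" "series_conv a e z"
  shows "y = z"
proof
  fix k show "y k = z k"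
    using series_conv_pointwise[OF assms(1,2,4)] series_conv_pointwise[OF assms(1,3,5)]
    by (rule LIMSEQ_unique)
qed

lemma series_norm_eq:
  assumes e: "\<And>n. e n \<in> c0" and "y \<in> c0" "series_conv a e y"
  shows "series_norm a e = ereal (c0norm y)"
proof -
  have "(THE y. y \<in> c0 \<and> series_conv a e y) = y"
    using assms series_conv_unique[OF e] by (intro the_equality) auto
  then show ?thesis using assms unfolding series_norm_def by auto
qed

lemma series_norm_le_imp_conv:
  assumes e: "\<And>n. e n \<in> c0" and "series_norm a e \<le> ereal r"
  shows "\<exists>y\<in>c0. series_conv a e y \<and> c0norm y \<le> r"
proof -
  obtain y where y: "y \<in> c0" "series_conv a e y"
    using assms(2) unfolding series_norm_def by (auto split: if_splits)
  then show ?thesis using assms(2) series_norm_eq[OF e y] by auto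
qed

lemma series_norm_nonneg:
  assumes e: "\<And>n. e n \<in> c0" shows "0 \<le> series_norm a e"
proof (cases "\<exists>y\<in>c0. series_conv a e y")
  case True
  then show ?thesis using series_norm_eq[OF e] c0norm_nonneg by auto
qed (simp add: series_norm_def)

lemma r_unc_nonneg: "(\<And>n. e n \<in> c0) \<Longrightarrow> 0 \<le> r_unc e \<epsilon>"
  unfolding r_unc_def
  using series_norm_nonneg by (intro SUP_upper2[of "\<lambda>_. 1"]) (auto simp: signs_def)

lemma sum_abs_basis_le:
  assumes e: "\<And>n. e n \<in> c0"
    and bound: "\<And>\<theta>. \<theta> \<in> signs \<Longrightarrow> \<exists>y\<in>c0. series_conv (\<lambda>n. \<theta> n * \<epsilon> n) e y \<and> c0norm y \<le> r"
  shows "(\<Sum>n<N. \<epsilon> n * \<bar>e n k\<bar>) \<le> r"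
proof -
  define c where "c = (\<Sum>n<N. \<epsilon> n * \<bar>e n k\<bar>)"
  define s where "s n = (if e n k \<ge> 0 then 1 else -1::real)" for n
  define \<theta>\<^sub>1 where "\<theta>\<^sub>1 n = (if n < N then s n else 1)" for n
  define \<theta>\<^sub>2 where "\<theta>\<^sub>2 n = (if n < N then s n else -1)" for n
  have "\<theta>\<^sub>1 \<in> signs" "\<theta>\<^sub>2 \<in> signs" unfolding signs_def \<theta>\<^sub>1_def \<theta>\<^sub>2_def s_def by auto
  then obtain y\<^sub>1 y\<^sub>2 where
    y\<^sub>1: "y\<^sub>1 \<in> c0" "series_conv (\<lambda>n. \<theta>\<^sub>1 n * \<epsilon> n) e y\<^sub>1" "c0norm y\<^sub>1 \<le> r" and
    y\<^sub>2: "y\<^sub>2 \<in> c0" "series_conv (\<lambda>n. \<theta>\<^sub>2 n * \<epsilon> n) e y\<^sub>2" "c0norm y\<^sub>2 \<le> r"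
    using bound by meson
  let ?S = "\<lambda>M. (\<Sum>n<M. \<theta>\<^sub>1 n * \<epsilon> n * e n k) + (\<Sum>n<M. \<theta>\<^sub>2 n * \<epsilon> n * e n k)"
  have lim: "?S \<longlonglongrightarrow> y\<^sub>1 k + y\<^sub>2 k"
    by (intro tendsto_add series_conv_pointwise[OF e y\<^sub>1(1,2)] series_conv_pointwise[OF e y\<^sub>2(1,2)])
  have "?S M = 2 * c" if "N \<le> M" for M
  proof -
    have "?S M = (\<Sum>n<M. if n \<in> {..<N} then 2 * (\<epsilon> n * \<bar>e n k\<bar>) else 0)"
      unfolding sum.distrib[symmetric] by (rule sum.cong) (auto simp: \<theta>\<^sub>1_def \<theta>\<^sub>2_def s_def)
    also have "\<dots> = (\<Sum>n\<in>{..<M} \<inter> {..<N}. 2 * (\<epsilon> n * \<bar>e n k\<bar>))"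
      by (rule sum.inter_restrict[symmetric]) auto
    also have "{..<M} \<inter> {..<N} = {..<N}" using that by auto
    finally show ?thesis by (simp add: c_def sum_distrib_left)
  qed
  then have "?S \<longlonglongrightarrow> 2 * c"
    by (intro Lim_transform_eventually[OF tendsto_const] eventually_sequentiallyI[of N]) simp
  with lim have "y\<^sub>1 k + y\<^sub>2 k = 2 * c" using LIMSEQ_unique by blast
  moreover have "\<bar>y\<^sub>1 k\<bar> \<le> r" "\<bar>y\<^sub>2 k\<bar> \<le> r"
    using abs_le_c0norm[OF y\<^sub>1(1)] abs_le_c0norm[OF y\<^sub>2(1)] y\<^sub>1(3) y\<^sub>2(3) by (meson order_trans)+
  ultimately show ?thesis unfolding c_def by linarith
qed

lemma brick_c0norm_le_r_unc:
  assumes sb: "schauder_basis e" and x: "x \<in> brick e \<epsilon>"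
  shows "ereal (c0norm x) \<le> r_unc e \<epsilon>"
proof (cases "r_unc e \<epsilon>")
  case (real r)
  have e: "\<And>n. e n \<in> c0" using sb by (simp add: schauder_basis_def)
  have bound: "\<exists>y\<in>c0. series_conv (\<lambda>n. \<theta> n * \<epsilon> n) e y \<and> c0norm y \<le> r" if "\<theta> \<in> signs" for \<theta>
    using that real unfolding r_unc_def by (intro series_norm_le_imp_conv[OF e]) (metis SUP_upper)
  have xc: "x \<in> c0" and coef: "\<And>n. \<bar>coef e n x\<bar> \<le> \<epsilon> n" using x by (auto simp: brick_def)
  have conv: "series_conv (\<lambda>n. coef e n x) e x"
    unfolding coef_def using theI'[of "\<lambda>a. series_conv a e x"] sb xc
    by (auto simp: schauder_basis_def)
  have "\<bar>x k\<bar> \<le> r" for k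
  proof (rule LIMSEQ_le_const2[OF tendsto_rabs[OF series_conv_pointwise[OF e xc conv]]])
    show "\<exists>N0. \<forall>N\<ge>N0. \<bar>\<Sum>n<N. coef e n x * e n k\<bar> \<le> r"
    proof (intro exI allI impI)
      fix N
      have "\<bar>\<Sum>n<N. coef e n x * e n k\<bar> \<le> (\<Sum>n<N. \<epsilon> n * \<bar>e n k\<bar>)"
        by (rule order_trans[OF sum_abs sum_mono]) (auto simp: abs_mult intro: mult_right_mono coef)
      also have "\<dots> \<le> r" by (rule sum_abs_basis_le[OF e bound])
      finally show "\<bar>\<Sum>n<N. coef e n x * e n k\<bar> \<le> r" .
    qed
  qed
  then show ?thesis using real by (simp add: c0norm_le)
qed (use r_unc_nonneg[of e \<epsilon>] sb in \<open>auto simp: schauder_basis_def\<close>)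

lemma Sup_c0norm_le_entropy:
  "Sup (insert 0 ((\<lambda>x. ereal (c0norm x)) ` A)) \<le> entropy A"
  unfolding entropy_def
proof (intro INF_greatest Sup_least)
  fix p z assume p: "p \<in> {(e, \<epsilon>). schauder_basis e \<and> (\<forall>n. \<epsilon> n \<ge> 0) \<and> A \<subseteq> brick e \<epsilon>}"
    and z: "z \<in> insert 0 ((\<lambda>x. ereal (c0norm x)) ` A)"
  then obtain e \<epsilon> where p: "p = (e, \<epsilon>)" and sb: "schauder_basis e" and A: "A \<subseteq> brick e \<epsilon>"
    by auto
  from z have "z \<le> r_unc e \<epsilon>"
  proof
    assume "z = 0"
    then show ?thesis using sb by (simp add: r_unc_nonneg schauder_basis_def)
  next
    assume "z \<in> (\<lambda>x. ereal (c0norm x)) ` A"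
    then show ?thesis using A brick_c0norm_le_r_unc[OF sb] by blast
  qed
  then show "z \<le> r_unc (fst p) (snd p)" by (simp add: p)
qed

lemma entropy_le_entropy0: "entropy A \<le> entropy0 A"
  unfolding entropy_def entropy0_def
  by (rule INF_superset_mono) (auto simp: unconditional_basis_def)

subsection \<open>The unit vector basis\<close>

definition unit_basis :: "nat \<Rightarrow> nat \<Rightarrow> real" where
  "unit_basis n k = (if k = n then 1 else 0)"

lemma sum_unit_basis: "(\<Sum>n<N. a n * unit_basis n k) = (if k < N then a k else 0)"
  by (simp add: unit_basis_def if_distrib[of "(*) _"] sum.delta' cong: if_cong)

lemma unit_basis_c0: "unit_basis n \<in> c0"
proof -
  have "\<forall>\<^sub>F k in sequentially. 0 = unit_basis n k"
    by (rule eventually_sequentiallyI[of "Suc n"]) (simp add: unit_basis_def)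
  then have "unit_basis n \<longlonglongrightarrow> 0" by (rule Lim_transform_eventually[OF tendsto_const])
  then show ?thesis by (simp add: c0_def)
qed

lemma c0norm_unit_basis: "c0norm (unit_basis n) = 1"
  using abs_le_c0norm[OF unit_basis_c0, of n n]
  by (intro antisym c0norm_le) (auto simp: unit_basis_def)

lemma series_conv_unit_basis:
  assumes x: "x \<in> c0" shows "series_conv x unit_basis x"
  unfolding series_conv_def
proof (rule tendstoI)
  fix r :: real assume r: "0 < r"
  have "\<forall>\<^sub>F k in sequentially. dist (x k) 0 < r/2"
    using x r by (intro tendstoD) (auto simp: c0_def)
  then obtain K where K: "\<And>k. k \<ge> K \<Longrightarrow> \<bar>x k\<bar> < r/2" by (auto simp: eventually_sequentially)
  show "\<forall>\<^sub>F N in sequentially. dist (c0norm (\<lambda>k. (\<Sum>n<N. x n * unit_basis n k) - x k)) 0 < r"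
  proof (rule eventually_sequentiallyI[of K])
    fix N assume "K \<le> N"
    have "c0norm (\<lambda>k. (\<Sum>n<N. x n * unit_basis n k) - x k) \<le> r/2"
    proof (rule c0norm_le)
      fix k show "\<bar>(\<Sum>n<N. x n * unit_basis n k) - x k\<bar> \<le> r/2"
        using K[of k] \<open>K \<le> N\<close> r by (auto simp: sum_unit_basis)
    qed
    moreover have "(\<lambda>k. (\<Sum>n<N. x n * unit_basis n k) - x k) \<in> c0"
      using c0_diff[OF c0_sum[of "{..<N}" "\<lambda>n k. x n * unit_basis n k"] x] c0_scale unit_basis_c0
      by auto
    ultimately show "dist (c0norm (\<lambda>k. (\<Sum>n<N. x n * unit_basis n k) - x k)) 0 < r"
      using c0norm_nonneg r by (simp add: dist_real_def)
  qed
qed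

lemma series_conv_unit_basis_unique:
  assumes x: "x \<in> c0" and conv: "series_conv a unit_basis x" shows "a = x"
proof
  fix k
  have "(\<lambda>N. if k < N then a k else 0) \<longlonglongrightarrow> x k"
    using series_conv_pointwise[OF unit_basis_c0 x conv, of k] by (simp add: sum_unit_basis)
  moreover have "(\<lambda>N. if k < N then a k else 0) \<longlonglongrightarrow> a k"
    by (rule Lim_transform_eventually[OF tendsto_const eventually_sequentiallyI[of "Suc k"]]) auto
  ultimately show "a k = x k" using LIMSEQ_unique by blast
qed

lemma coef_unit_basis: "x \<in> c0 \<Longrightarrow> coef unit_basis n x = x n"
  unfolding coef_def
  using the_equality[of "\<lambda>a. series_conv a unit_basis x" x]
    series_conv_unit_basis series_conv_unit_basis_unique by metis

lemma schauder_basis_unit_basis: "schauder_basis unit_basis"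
  unfolding schauder_basis_def
  using unit_basis_c0 c0norm_unit_basis series_conv_unit_basis series_conv_unit_basis_unique
  by blast

lemma unconditional_basis_unit_basis: "unconditional_basis unit_basis"
  unfolding unconditional_basis_def
proof (intro conjI schauder_basis_unit_basis ballI)
  fix x \<theta> assume x: "x \<in> c0" and \<theta>: "\<theta> \<in> signs"
  have "series_conv (\<lambda>n. \<theta> n * coef unit_basis n x) unit_basis (\<lambda>n. \<theta> n * x n)"
    using series_conv_unit_basis[OF c0_sign_mult[OF x \<theta>]] by (simp add: coef_unit_basis[OF x])
  then show "\<exists>y\<in>c0. series_conv (\<lambda>n. \<theta> n * coef unit_basis n x) unit_basis y \<and> c0norm y \<le> c0norm x"
    using c0_sign_mult[OF x \<theta>] c0norm_sign_mult[OF \<theta>] by auto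
qed

lemma r_unc_unit_basis_le:
  assumes "\<epsilon> \<in> c0" shows "r_unc unit_basis \<epsilon> \<le> ereal (c0norm \<epsilon>)"
  unfolding r_unc_def
proof (rule SUP_least)
  fix \<theta> assume \<theta>: "\<theta> \<in> signs"
  have "(\<lambda>n. \<theta> n * \<epsilon> n) \<in> c0" by (rule c0_sign_mult[OF assms \<theta>])
  then show "series_norm (\<lambda>n. \<theta> n * \<epsilon> n) unit_basis \<le> ereal (c0norm \<epsilon>)"
    using series_norm_eq[OF unit_basis_c0 _ series_conv_unit_basis] c0norm_sign_mult[OF \<theta>]
    by simp
qed

lemma entropy0_le_unit_brick:
  assumes "\<epsilon> \<in> c0" "\<And>n. 0 \<le> \<epsilon> n" "A \<subseteq> brick unit_basis \<epsilon>"
  shows "entropy0 A \<le> ereal (c0norm \<epsilon>)"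
proof -
  have "entropy0 A \<le> r_unc unit_basis \<epsilon>"
    unfolding entropy0_def using assms unconditional_basis_unit_basis
    by (intro INF_lower2[of "(unit_basis, \<epsilon>)"]) auto
  also have "\<dots> \<le> ereal (c0norm \<epsilon>)" by (rule r_unc_unit_basis_le[OF assms(1)])
  finally show ?thesis .
qed

subsection \<open>The coordinatewise envelope of a precompact set\<close>

definition coord_sup :: "(nat \<Rightarrow> real) set \<Rightarrow> nat \<Rightarrow> real" where
  "coord_sup A n = Sup (insert 0 ((\<lambda>x. \<bar>x n\<bar>) ` A))"

lemma coord_sup_le: "0 \<le> t \<Longrightarrow> (\<And>x. x \<in> A \<Longrightarrow> \<bar>x n\<bar> \<le> t) \<Longrightarrow> coord_sup A n \<le> t"
  unfolding coord_sup_def by (intro cSup_least) auto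

lemma abs_le_coord_sup:
  assumes "\<forall>y\<in>A. \<forall>k. \<bar>y k\<bar> \<le> M" and "x \<in> A"
  shows "\<bar>x n\<bar> \<le> coord_sup A n"
  unfolding coord_sup_def using assms
  by (intro cSup_upper bdd_aboveI[of _ "max 0 M"]) (auto intro: max.coboundedI2)

text \<open>Without a bound the real supremum of an unbounded set is an unspecified value.\<close>

lemma coord_sup_nonneg:
  assumes "\<forall>y\<in>A. \<forall>k. \<bar>y k\<bar> \<le> M" shows "0 \<le> coord_sup A n"
  unfolding coord_sup_def using assms
  by (intro cSup_upper bdd_aboveI[of _ "max 0 M"]) (auto intro: max.coboundedI2)

lemma precompact_c0_bounded:
  assumes "A \<subseteq> c0" "precompact_c0 A"
  obtains M where "\<forall>x\<in>A. \<forall>k. \<bar>x k\<bar> \<le> M"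
proof -
  obtain F where F: "finite F" "F \<subseteq> A" "\<forall>x\<in>A. \<exists>y\<in>F. c0norm (\<lambda>k. x k - y k) < 1"
    using assms(2) unfolding precompact_c0_def by (meson zero_less_one)
  have "\<bar>x k\<bar> \<le> (\<Sum>y\<in>F. c0norm y) + 1" if x: "x \<in> A" for x k
  proof -
    obtain y where y: "y \<in> F" "c0norm (\<lambda>k. x k - y k) < 1" using F x by auto
    have "x \<in> c0" "y \<in> c0" using x y F assms(1) by auto
    then have "\<bar>x k - y k\<bar> \<le> c0norm (\<lambda>k. x k - y k)" "\<bar>y k\<bar> \<le> c0norm y"
      using abs_le_c0norm c0_diff by blast+
    moreover have "c0norm y \<le> (\<Sum>y\<in>F. c0norm y)"
      using F assms(1) y by (intro member_le_sum c0norm_nonneg) auto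
    ultimately show ?thesis using y(2) by linarith
  qed
  then show ?thesis using that by blast
qed

text \<open>Beyond the index where all members of a finite r/4-net of A are below r/4, every
  element of A is below r/2.\<close>

lemma coord_sup_c0:
  assumes A: "A \<subseteq> c0" and pc: "precompact_c0 A"
  shows "coord_sup A \<in> c0"
  unfolding c0_def
proof (intro CollectI tendstoI)
  fix r :: real assume r: "0 < r"
  obtain M where M: "\<forall>x\<in>A. \<forall>k. \<bar>x k\<bar> \<le> M"
    using precompact_c0_bounded[OF A pc] by blast
  obtain F where F: "finite F" "F \<subseteq> A" "\<forall>x\<in>A. \<exists>y\<in>F. c0norm (\<lambda>k. x k - y k) < r/4"
    using pc r unfolding precompact_c0_def by (meson divide_pos_pos zero_less_numeral)
  have "\<forall>\<^sub>F n in sequentially. dist (y n) 0 < r/4" if "y \<in> F" for y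
    using that F(2) A r by (intro tendstoD) (auto simp: c0_def)
  then have "\<forall>\<^sub>F n in sequentially. \<forall>y\<in>F. dist (y n) 0 < r/4"
    by (subst eventually_ball_finite_distrib[OF F(1)]) blast
  then show "\<forall>\<^sub>F n in sequentially. dist (coord_sup A n) 0 < r"
  proof (rule eventually_mono)
    fix n assume small: "\<forall>y\<in>F. dist (y n) 0 < r/4"
    have "coord_sup A n \<le> r/2"
    proof (rule coord_sup_le)
      fix x assume x: "x \<in> A"
      obtain y where y: "y \<in> F" "c0norm (\<lambda>k. x k - y k) < r/4" using F(3) x by blast
      have "\<bar>x n - y n\<bar> \<le> c0norm (\<lambda>k. x k - y k)"
        using x y F(2) A by (intro abs_le_c0norm c0_diff) auto
      moreover have "\<bar>y n\<bar> < r/4" using small y by simp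
      ultimately show "\<bar>x n\<bar> \<le> r/2" using y(2) by linarith
    qed (use r in simp)
    then show "dist (coord_sup A n) 0 < r" using coord_sup_nonneg[OF M, of n] r by simp
  qed
qed

lemma c0norm_coord_sup_le:
  assumes "A \<subseteq> c0" and M: "\<forall>y\<in>A. \<forall>k. \<bar>y k\<bar> \<le> M" and fin: "Sup (insert 0 ((\<lambda>x. ereal (c0norm x)) ` A)) < \<infinity>"
  shows "ereal (c0norm (coord_sup A)) \<le> Sup (insert 0 ((\<lambda>x. ereal (c0norm x)) ` A))"
    (is "_ \<le> ?S")
proof -
  have "0 \<le> ?S" by (rule Sup_upper) simp
  with fin obtain s where s: "?S = ereal s" by (cases ?S) auto
  have "c0norm x \<le> s" if "x \<in> A" for x
  proof -
    have "ereal (c0norm x) \<le> ?S" using that by (intro Sup_upper) auto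
    then show ?thesis using s by simp
  qed
  then have "c0norm (coord_sup A) \<le> s"
    using assms(1) s \<open>0 \<le> ?S\<close> coord_sup_nonneg[OF M]
    by (intro c0norm_le) (auto intro!: coord_sup_le order_trans[OF abs_le_c0norm])
  then show ?thesis using s by simp
qed

theorem proposition4p9:
  fixes A :: "(nat \<Rightarrow> real) set"
  assumes "A \<subseteq> c0" and "precompact_c0 A"
  shows "entropy A < \<infinity> \<and> entropy A = entropy0 A \<and>
         entropy0 A = Sup (insert 0 ((\<lambda>x. ereal (c0norm x)) ` A))"
proof -
  define S where "S = Sup (insert 0 ((\<lambda>x. ereal (c0norm x)) ` A))"
  obtain M where M: "\<forall>x\<in>A. \<forall>k. \<bar>x k\<bar> \<le> M"
    using precompact_c0_bounded[OF assms] by blast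
  have "A \<subseteq> brick unit_basis (coord_sup A)"
    using assms(1) abs_le_coord_sup[OF M] by (auto simp: brick_def coef_unit_basis)
  then have up: "entropy0 A \<le> ereal (c0norm (coord_sup A))"
    using coord_sup_c0[OF assms] coord_sup_nonneg[OF M] by (intro entropy0_le_unit_brick)
  have low: "S \<le> entropy A" unfolding S_def by (rule Sup_c0norm_le_entropy)
  have mid: "entropy A \<le> entropy0 A" by (rule entropy_le_entropy0)
  have "S \<le> ereal (c0norm (coord_sup A))" using low mid up by (blast intro: order_trans)
  then have "S < \<infinity>" by (rule le_less_trans) simp
  then have top: "ereal (c0norm (coord_sup A)) \<le> S"
    unfolding S_def by (rule c0norm_coord_sup_le[OF assms(1) M])
  have "entropy A = S" "entropy0 A = S"
    using low mid up top by (auto intro: antisym order_trans)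
  with \<open>S < \<infinity>\<close> show ?thesis unfolding S_def by simp
qed

end
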